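(* Let $X$ be a rational ruled surface, let $c_1=a(\sigma+f)$ with $a\in\{0,1\}$, and let $c_2$ be an integer with $3c_2-c_1^2>0$. Let $F$ be a divisor on $X$ and $\zeta=3F-c_1$, and suppose there exist ample divisors $L_1,L_2$ with $\zeta\cdot L_1<0<\zeta\cdot L_2$ and that $-4(3c_2-c_1^2)\le\zeta^2<0$. Define $$d_\zeta(c_1,c_2)=-\frac{3c_2-c_1^2}{3}+2+\frac{\zeta^2}{6}+\frac{K_X\cdot\zeta}{2}.$$ Then: (i) if $a=0$, then $d_\zeta(c_1,c_2)<0$; (ii) if $a=1$, then $d_\zeta(c_1,c_2)\le 0$, with equality if and only if either $\zeta\equiv 2\sigma-(3c_2-2)f$, or $e=0$ and $\zeta\equiv-(3c_2-2)\sigma+2f$.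
   Context: $X$ is a rational ruled surface with ruling $\pi:X\to\mathbb{P}^1$; $f$ is a fiber of $\pi$ and $\sigma$ is a section of $\pi$ with $\sigma^2$ minimal; $e=-\sigma^2\ge 0$. The Picard group of $X$ is generated by $\sigma$ and $f$, with $\sigma^2=-e$, $\sigma\cdot f=1$, $f^2=0$, and the canonical divisor is $K_X=-2\sigma-(2+e)f$. $\equiv$ denotes numerical equivalence. *)

theory Defs
  imports Complex_Main
begin

text \<open>Model of the numerical N^1 of the rational ruled surface X = F_e (e = -sigma^2 >= 0).
  A divisor class is given by its coordinates (x, y) in the basis (sigma, f), i.e. x sigma + y f.
  Pic X = Z sigma + Z f and the intersection form is nondegenerate, so numerical
  equivalence of divisors is equality of these coordinate pairs.\<close>

type_synonym divcls = "int \<times> int"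

definition sig :: divcls where "sig = (1, 0)"
definition fib :: divcls where "fib = (0, 1)"

definition dadd :: "divcls \<Rightarrow> divcls \<Rightarrow> divcls" where
  "dadd D E = (fst D + fst E, snd D + snd E)"
definition dsmul :: "int \<Rightarrow> divcls \<Rightarrow> divcls" where
  "dsmul k D = (k * fst D, k * snd D)"
definition dminus :: "divcls \<Rightarrow> divcls \<Rightarrow> divcls" where
  "dminus D E = (fst D - fst E, snd D - snd E)"

definition inter :: "nat \<Rightarrow> divcls \<Rightarrow> divcls \<Rightarrow> int" where
  "inter e D E = - int e * fst D * fst E + fst D * snd E + snd D * fst E"

definition canon :: "nat \<Rightarrow> divcls" where
  "canon e = (-2, - (2 + int e))"

text \<open>Ampleness on F_e (e >= 0), Hartshorne V.2.18: x sigma + y f is ample iff x > 0 and y > x e.\<close>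
definition ample :: "nat \<Rightarrow> divcls \<Rightarrow> bool" where
  "ample e D \<longleftrightarrow> fst D > 0 \<and> snd D > fst D * int e"

definition d_zeta :: "nat \<Rightarrow> divcls \<Rightarrow> int \<Rightarrow> divcls \<Rightarrow> real" where
  "d_zeta e c1 c2 \<zeta> =
     - real_of_int (3 * c2 - inter e c1 c1) / 3 + 2
     + real_of_int (inter e \<zeta> \<zeta>) / 6 + real_of_int (inter e (canon e) \<zeta>) / 2"

end

theory Submission
  imports Defs
begin

text \<open>Since \<open>K\<^sub>X\<^sup>2 = 8\<close>, the quantity \<open>12 d\<^sub>\<zeta>\<close> equals \<open>3 (\<zeta> + K\<^sub>X)\<^sup>2 - (\<zeta>\<^sup>2 + 4 (3 c\<^sub>2 - c\<^sub>1\<^sup>2))\<close>,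
  and the second term is nonnegative by the lower bound on \<open>\<zeta>\<^sup>2\<close>. Writing \<open>\<zeta> = x \<sigma> + y f\<close>, one has
  \<open>(\<zeta> + K\<^sub>X)\<^sup>2 = (x - 2) (2 y - e x - 4)\<close>. Intersecting \<zeta> with the two ample classes forces \<open>x\<close> and
  \<open>y\<close> to be nonzero of opposite signs, and \<open>\<zeta> \<equiv> -c\<^sub>1 (mod 3)\<close> makes the positive one at least 2
  (and different from 2 when \<open>a = 0\<close>). Hence \<open>(\<zeta> + K\<^sub>X)\<^sup>2 \<le> 0\<close>, with equality only for \<open>x = 2\<close> or
  \<open>e = 0, y = 2\<close>; the equality cases of the theorem are where both terms vanish.\<close>

lemma inter_commute: "inter e D E = inter e E D"
  unfolding inter_def by (simp add: algebra_simps)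

lemma inter_dadd_self:
  "inter e (dadd D E) (dadd D E) = inter e D D + 2 * inter e D E + inter e E E"
  unfolding inter_def dadd_def by (simp add: algebra_simps)

lemma inter_canon_self: "inter e (canon e) (canon e) = 8"
  unfolding inter_def canon_def by (simp add: algebra_simps)

lemma d_zeta_eq:
  "d_zeta e c1 c2 \<zeta> =
     (3 * inter e (dadd \<zeta> (canon e)) (dadd \<zeta> (canon e))
       - (inter e \<zeta> \<zeta> + 4 * (3 * c2 - inter e c1 c1))) / 12"
proof -
  have "3 * inter e (dadd \<zeta> (canon e)) (dadd \<zeta> (canon e)) - (inter e \<zeta> \<zeta> + 4 * (3 * c2 - inter e c1 c1))
      = - 4 * (3 * c2 - inter e c1 c1) + 24 + 2 * inter e \<zeta> \<zeta> + 6 * inter e (canon e) \<zeta>"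
    unfolding inter_dadd_self inter_canon_self inter_commute[of e \<zeta> "canon e"] by simp
  then show ?thesis unfolding d_zeta_def by (simp add: field_simps)
qed

lemma inter_shift_canon_self:
  "inter e (dadd (x, y) (canon e)) (dadd (x, y) (canon e)) = (x - 2) * (2 * y - int e * x - 4)"
  unfolding inter_def canon_def dadd_def by (simp add: algebra_simps)

lemma inter_ample_neg_imp:
  assumes "ample e L" "inter e (x, y) L < 0"
  shows "x < 0 \<or> y < 0"
proof (rule ccontr)
  assume "\<not> (x < 0 \<or> y < 0)"
  moreover have "inter e (x, y) L = x * (snd L - fst L * int e) + y * fst L"
    unfolding inter_def by (simp add: algebra_simps)
  ultimately have "inter e (x, y) L \<ge> 0"
    using \<open>ample e L\<close> unfolding ample_def by simp
  with assms(2) show False by simp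
qed

lemma inter_ample_pos_imp:
  assumes "ample e L" "0 < inter e (x, y) L"
  shows "0 < x \<or> 0 < y"
proof -
  have "inter e (- x, - y) L < 0"
    using assms(2) unfolding inter_def by simp
  with inter_ample_neg_imp[OF assms(1)] show ?thesis by fastforce
qed

lemma opposite_signs_if_wall:
  assumes "ample e L1" "ample e L2" "inter e (x, y) L1 < 0" "0 < inter e (x, y) L2"
  shows "(0 < x \<and> y < 0) \<or> (x < 0 \<and> 0 < y)"
  using inter_ample_neg_imp[OF assms(1,3)] inter_ample_pos_imp[OF assms(2,4)] by auto

lemma shift_canon_factor_nonpos:
  fixes x y :: int
  assumes "(2 \<le> x \<and> y < 0) \<or> (x < 0 \<and> 2 \<le> y)"
  shows "(x - 2) * (2 * y - int e * x - 4) \<le> 0"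
    and "(x - 2) * (2 * y - int e * x - 4) = 0 \<longleftrightarrow> x = 2 \<or> (e = 0 \<and> y = 2)"
proof -
  define f where "f = 2 * y - int e * x - 4"
  have "(x - 2) * f \<le> 0 \<and> ((x - 2) * f = 0 \<longleftrightarrow> x = 2 \<or> (e = 0 \<and> y = 2))"
    using assms
  proof (elim disjE conjE)
    assume "2 \<le> x" "y < 0"
    moreover have "int e * x \<ge> 0" using \<open>2 \<le> x\<close> by simp
    ultimately have "f < 0" unfolding f_def by linarith
    with \<open>2 \<le> x\<close> \<open>y < 0\<close> show ?thesis by (auto simp: mult_le_0_iff)
  next
    assume "x < 0" "2 \<le> y"
    moreover have "int e * x \<le> 0" using \<open>x < 0\<close> by (simp add: mult_nonneg_nonpos)
    moreover have "int e * x = 0 \<longleftrightarrow> e = 0" using \<open>x < 0\<close> by simp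
    ultimately have "f \<ge> 0" and "f = 0 \<longleftrightarrow> e = 0 \<and> y = 2"
      unfolding f_def by linarith+
    with \<open>x < 0\<close> show ?thesis by (auto simp: mult_le_0_iff)
  qed
  then show "(x - 2) * (2 * y - int e * x - 4) \<le> 0"
    and "(x - 2) * (2 * y - int e * x - 4) = 0 \<longleftrightarrow> x = 2 \<or> (e = 0 \<and> y = 2)"
    unfolding f_def by auto
qed

lemma two_le_if_pos_shifted_triple:
  fixes a k :: int
  assumes "a \<in> {0, 1}" "0 < 3 * k - a"
  shows "2 \<le> 3 * k - a"
proof -
  have "a = 0 \<or> a = 1" using assms(1) by simp
  with assms(2) show ?thesis by presburger
qed

lemma equality_cases_iff:
  fixes x y c2 :: int
  shows "((x = 2 \<or> (e = 0 \<and> y = 2))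
           \<and> inter e (x, y) (x, y) + 4 * (3 * c2 - inter e (1, 1) (1, 1)) = 0)
         \<longleftrightarrow> (x, y) = (2, - (3 * c2 - 2)) \<or> (e = 0 \<and> (x, y) = (- (3 * c2 - 2), 2))"
proof -
  have "inter e (2, y) (2, y) + 4 * (3 * c2 - inter e (1, 1) (1, 1)) = 4 * (y + (3 * c2 - 2))"
    and "inter 0 (x, 2) (x, 2) + 4 * (3 * c2 - inter 0 (1, 1) (1, 1)) = 4 * (x + (3 * c2 - 2))"
    unfolding inter_def by (simp_all add: algebra_simps)
  then show ?thesis by auto
qed

theorem lemma2p6:
  fixes e :: nat and a :: int and c2 :: int and F c1 \<zeta> :: divcls
  assumes ha: "a \<in> {0, 1}"
    and hc1: "c1 = dsmul a (dadd sig fib)"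
    and hdisc: "3 * c2 - inter e c1 c1 > 0"
    and hzeta: "\<zeta> = dminus (dsmul 3 F) c1"
    and hwall: "\<exists>L1 L2. ample e L1 \<and> ample e L2 \<and> inter e \<zeta> L1 < 0 \<and> 0 < inter e \<zeta> L2"
    and hlow: "- 4 * (3 * c2 - inter e c1 c1) \<le> inter e \<zeta> \<zeta>"
    and hneg: "inter e \<zeta> \<zeta> < 0"
  shows "(a = 0 \<longrightarrow> d_zeta e c1 c2 \<zeta> < 0)
       \<and> (a = 1 \<longrightarrow> d_zeta e c1 c2 \<zeta> \<le> 0
            \<and> (d_zeta e c1 c2 \<zeta> = 0 \<longleftrightarrow>
                 (\<zeta> = dminus (dsmul 2 sig) (dsmul (3 * c2 - 2) fib)
                  \<or> (e = 0 \<and> \<zeta> = dadd (dsmul (- (3 * c2 - 2)) sig) (dsmul 2 fib)))))"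
proof -
  obtain F1 F2 where F: "F = (F1, F2)" by (cases F)
  have c1: "c1 = (a, a)" using hc1 by (simp add: dsmul_def dadd_def sig_def fib_def)
  define x y where "x = 3 * F1 - a" and "y = 3 * F2 - a"
  have \<zeta>: "\<zeta> = (x, y)" using hzeta unfolding F c1 x_def y_def by (simp add: dminus_def dsmul_def)
  define G where "G = (x - 2) * (2 * y - int e * x - 4)"
  define B where "B = inter e \<zeta> \<zeta> + 4 * (3 * c2 - inter e c1 c1)"
  have d: "d_zeta e c1 c2 \<zeta> = (3 * G - B) / 12"
    unfolding d_zeta_eq G_def B_def \<zeta> inter_shift_canon_self by simp
  have "B \<ge> 0" using hlow unfolding B_def by simp
  have "(0 < x \<and> y < 0) \<or> (x < 0 \<and> 0 < y)"
    using hwall opposite_signs_if_wall unfolding \<zeta> by blast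
  then have "(2 \<le> x \<and> y < 0) \<or> (x < 0 \<and> 2 \<le> y)"
    using two_le_if_pos_shifted_triple[OF ha] unfolding x_def y_def by blast
  note G_nonpos = shift_canon_factor_nonpos[of x y e, OF this, folded G_def]
  have d_zero: "d_zeta e c1 c2 \<zeta> = 0 \<longleftrightarrow> (x = 2 \<or> (e = 0 \<and> y = 2)) \<and> B = 0"
    using G_nonpos \<open>B \<ge> 0\<close> unfolding d by auto
  have "d_zeta e c1 c2 \<zeta> < 0" if "a = 0"
  proof -
    have "x \<noteq> 2" "y \<noteq> 2" unfolding x_def y_def \<open>a = 0\<close> by presburger+
    then show ?thesis using G_nonpos \<open>B \<ge> 0\<close> unfolding d by fastforce
  qed
  moreover have "dminus (dsmul 2 sig) (dsmul (3 * c2 - 2) fib) = (2, - (3 * c2 - 2))"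
    and "dadd (dsmul (- (3 * c2 - 2)) sig) (dsmul 2 fib) = (- (3 * c2 - 2), 2)"
    by (simp_all add: dminus_def dadd_def dsmul_def sig_def fib_def)
  moreover have "d_zeta e c1 c2 \<zeta> \<le> 0"
    using G_nonpos(1) \<open>B \<ge> 0\<close> unfolding d by simp
  moreover have "B = inter e (x, y) (x, y) + 4 * (3 * c2 - inter e (1, 1) (1, 1))" if "a = 1"
    unfolding B_def \<zeta> c1 \<open>a = 1\<close> ..
  ultimately show ?thesis
    using d_zero equality_cases_iff[of x e y c2] unfolding \<zeta> by auto
qed

end
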